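(* Let $D$ be a tournament missing disjoint paths of length 2 and let $C=a_1b_1c_1,\dots,a_kb_kc_k$ be a double cycle in $\Delta(D)$. Writing $v^-$ and $v^{++}$ for $N^-_{D[K(C)]}(v)$ and $N^{++}_{D[K(C)]}(v)$, for every $t\in\{1,\dots,k\}$ (indices modulo $k$): (1) $a_t^{++}=(a_t^-\cup\{b_t\})\setminus\{a_{t+1},b_{t+1},c_{t+1},c_t\}$; (2) $c_t^{++}=(c_t^-\cup\{b_t\})\setminus\{a_{t+1},b_{t+1},c_{t+1},a_t\}$; (3) $b_t^{++}=(b_t^-\cup\{a_t,c_t\})\setminus\{a_{t+1},b_{t+1},c_{t+1}\}$.
   Context: All digraphs are finite oriented graphs; $D[X]$ is the induced subdigraph. $N^+_H(v)$, $N^-_H(v)$ are out/in-neighborhoods in $H$; $N^{++}_H(v)$ is the set of vertices $w\notin N_H^+(v)\cup\{v\}$ with $u\to w$ in $H$ for some $u\in N_H^+(v)$. A missing edge is a pair of distinct non-adjacent vertices; the missing graph is formed by the missing edges. $D$ is a tournament missing disjoint paths of length 2 if its missing graph is a vertex-disjoint union of paths each with exactly two edges. For missing edges $\{x,y\},\{a,b\}$, $\{x,y\}$ loses to $\{a,b\}$ (written $xy\to ab$) if the endpoints can be labelled so that $x\to a$, $b\notin N^+(x)\cup N^{++}(x)$, $y\to b$, $a\notin N^+(y)\cup N^{++}(y)$ (neighborhoods in $D$). $\Delta(D)$ has the missing edges as vertices and arcs $(e,e')$ whenever $e$ loses to $e'$. For missing paths $abc$, $xyz$, $abc\to xyz$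 means each of $ab,bc$ loses to each of $xy,yz$. A double cycle is a sequence $C=a_1b_1c_1,\dots,a_kb_kc_k$ ($k\ge2$) of distinct missing paths of length 2 (components of the missing graph, edges $a_ib_i,b_ic_i$) with $a_ib_ic_i\to a_{i+1}b_{i+1}c_{i+1}$ for all $i$, indices modulo $k$. $K(C)=\{a_i,b_i,c_i:1\le i\le k\}$. *)

theory Defs
  imports Main
begin

definition oriented_graph :: "'a set \<Rightarrow> ('a \<times> 'a) set \<Rightarrow> bool" where
  "oriented_graph V E \<longleftrightarrow> finite V \<and> E \<subseteq> V \<times> V \<and>
     (\<forall>v. (v, v) \<notin> E) \<and> (\<forall>u w. (u, w) \<in> E \<longrightarrow> (w, u) \<notin> E)"

text \<open>Neighbourhoods in the induced subdigraph D[X] (D = (V,E), X \<subseteq> V).\<close>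

definition out_nbr :: "'a set \<Rightarrow> ('a \<times> 'a) set \<Rightarrow> 'a \<Rightarrow> 'a set" where
  "out_nbr X E v = {w \<in> X. (v, w) \<in> E}"

definition in_nbr :: "'a set \<Rightarrow> ('a \<times> 'a) set \<Rightarrow> 'a \<Rightarrow> 'a set" where
  "in_nbr X E v = {w \<in> X. (w, v) \<in> E}"

definition second_out_nbr :: "'a set \<Rightarrow> ('a \<times> 'a) set \<Rightarrow> 'a \<Rightarrow> 'a set" where
  "second_out_nbr X E v =
     {w \<in> X. w \<notin> out_nbr X E v \<and> w \<noteq> v \<and> (\<exists>u \<in> out_nbr X E v. (u, w) \<in> E)}"

definition missing :: "'a set \<Rightarrow> ('a \<times> 'a) set \<Rightarrow> 'a \<Rightarrow> 'a \<Rightarrow> bool" where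
  "missing V E x y \<longleftrightarrow> x \<in> V \<and> y \<in> V \<and> x \<noteq> y \<and> (x, y) \<notin> E \<and> (y, x) \<notin> E"

text \<open>a b c is a component of the missing graph which is a path with edges ab, bc.\<close>

definition missing_path :: "'a set \<Rightarrow> ('a \<times> 'a) set \<Rightarrow> 'a \<Rightarrow> 'a \<Rightarrow> 'a \<Rightarrow> bool" where
  "missing_path V E a b c \<longleftrightarrow>
     a \<noteq> c \<and> missing V E a b \<and> missing V E b c \<and> \<not> missing V E a c \<and>
     (\<forall>w. missing V E a w \<longrightarrow> w = b) \<and>
     (\<forall>w. missing V E c w \<longrightarrow> w = b) \<and>
     (\<forall>w. missing V E b w \<longrightarrow> w = a \<or> w = c)"

text \<open>Tournament missing disjoint paths of length 2: oriented graph whose missing graph is a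
  vertex-disjoint union of paths with exactly two edges, i.e. every missing edge lies in such a
  component.\<close>

definition tournament_missing_P2 :: "'a set \<Rightarrow> ('a \<times> 'a) set \<Rightarrow> bool" where
  "tournament_missing_P2 V E \<longleftrightarrow> oriented_graph V E \<and>
     (\<forall>x y. missing V E x y \<longrightarrow>
        (\<exists>a b c. missing_path V E a b c \<and> ({x, y} = {a, b} \<or> {x, y} = {b, c})))"

definition loses :: "'a set \<Rightarrow> ('a \<times> 'a) set \<Rightarrow> 'a set \<Rightarrow> 'a set \<Rightarrow> bool" where
  "loses V E e f \<longleftrightarrow> (\<exists>x y a b. e = {x, y} \<and> f = {a, b} \<and>
       (x, a) \<in> E \<and> b \<notin> out_nbr V E x \<union> second_out_nbr V E x \<and>
       (y, b) \<in> E \<and> a \<notin> out_nbr V E y \<union> second_out_nbr V E y)"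

definition path_loses :: "'a set \<Rightarrow> ('a \<times> 'a) set \<Rightarrow> 'a \<Rightarrow> 'a \<Rightarrow> 'a \<Rightarrow> 'a \<Rightarrow> 'a \<Rightarrow> 'a \<Rightarrow> bool" where
  "path_loses V E a b c x y z \<longleftrightarrow>
     loses V E {a, b} {x, y} \<and> loses V E {a, b} {y, z} \<and>
     loses V E {b, c} {x, y} \<and> loses V E {b, c} {y, z}"

text \<open>Double cycle a_i b_i c_i, indexed by i = 0..k-1 (indices modulo k).\<close>

definition double_cycle :: "'a set \<Rightarrow> ('a \<times> 'a) set \<Rightarrow> nat \<Rightarrow>
    (nat \<Rightarrow> 'a) \<Rightarrow> (nat \<Rightarrow> 'a) \<Rightarrow> (nat \<Rightarrow> 'a) \<Rightarrow> bool" where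
  "double_cycle V E k a b c \<longleftrightarrow> k \<ge> 2 \<and>
     (\<forall>i < k. missing_path V E (a i) (b i) (c i)) \<and>
     (\<forall>i < k. \<forall>j < k. i \<noteq> j \<longrightarrow> {a i, b i, c i} \<noteq> {a j, b j, c j}) \<and>
     (\<forall>i < k. path_loses V E (a i) (b i) (c i)
                 (a (Suc i mod k)) (b (Suc i mod k)) (c (Suc i mod k)))"

definition K_set :: "nat \<Rightarrow> (nat \<Rightarrow> 'a) \<Rightarrow> (nat \<Rightarrow> 'a) \<Rightarrow> (nat \<Rightarrow> 'a) \<Rightarrow> 'a set" where
  "K_set k a b c = (\<Union>i < k. {a i, b i, c i})"

end

theory Submission
  imports Defs
begin

text \<open>When a missing path loses to the next one in the double cycle, all arcs between the two
  components are determined, and every arc from a component back to its predecessor lies on no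
  directed triangle. Hence a vertex outside two consecutive components that beats the middle and
  an end of the later one also beats the middle and an end of the earlier one. Walking backwards
  around the cycle this reaches the component following the vertex's own component, where the arc
  pattern forbids it; so no vertex beats the middle and an end of another component, and dually no
  vertex is beaten by the middle and an end of another component. These two facts decide, for each
  vertex of the components at t and t + 1, whether it is a second out-neighbour.\<close>

text \<open>For adjacent p \<noteq> q, triangle_free_arc E q p says exactly that q lies neither in the
  out-neighbourhood nor in the second out-neighbourhood of p, the condition used to define losing.\<close>

definition triangle_free_arc :: "('a \<times> 'a) set \<Rightarrow> 'a \<Rightarrow> 'a \<Rightarrow> bool" where
  "triangle_free_arc E p q \<longleftrightarrow> (p, q) \<in> E \<and> (\<forall>u. (q, u) \<in> E \<longrightarrow> (u, p) \<notin> E)"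

lemma triangle_free_arc_arc: "triangle_free_arc E p q \<Longrightarrow> (p, q) \<in> E"
  by (simp add: triangle_free_arc_def)

lemma triangle_free_arc_no_triangle:
  "triangle_free_arc E p q \<Longrightarrow> (q, u) \<in> E \<Longrightarrow> (u, p) \<notin> E"
  by (simp add: triangle_free_arc_def)

lemma second_out_nbrI:
  assumes "w \<in> X" "u \<in> X" "(v, u) \<in> E" "(u, w) \<in> E" "(v, w) \<notin> E" "w \<noteq> v"
  shows "w \<in> second_out_nbr X E v"
  using assms by (auto simp: second_out_nbr_def out_nbr_def)

lemma second_out_nbrE:
  assumes "w \<in> second_out_nbr X E v"
  obtains u where "w \<in> X" "u \<in> X" "(v, u) \<in> E" "(u, w) \<in> E" "(v, w) \<notin> E" "w \<noteq> v"
  using assms by (auto simp: second_out_nbr_def out_nbr_def)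

lemma triangle_free_arc_if_not_out_nbr:
  assumes "E \<subseteq> V \<times> V" and "q \<notin> out_nbr V E p \<union> second_out_nbr V E p"
    and "q \<in> V" "q \<noteq> p" "(p, q) \<in> E \<or> (q, p) \<in> E"
  shows "triangle_free_arc E q p"
proof -
  have pq: "(p, q) \<notin> E"
    using assms(2,3) by (auto simp: out_nbr_def)
  have "(u, q) \<notin> E" if "(p, u) \<in> E" for u
  proof
    assume "(u, q) \<in> E"
    then have "q \<in> second_out_nbr V E p"
      using that assms(1,3,4) pq by (blast intro: second_out_nbrI)
    with assms(2) show False by blast
  qed
  with pq assms(5) show ?thesis
    by (auto simp: triangle_free_arc_def)
qed

lemma loses_cases:
  assumes "E \<subseteq> V \<times> V" and "loses V E {p, q} {r, s}"
    and "\<And>x y. x \<in> {p, q} \<Longrightarrow> y \<in> {r, s} \<Longrightarrow> x \<noteq> y \<and> ((x, y) \<in> E \<or> (y, x) \<in> E)"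
  shows "(p, r) \<in> E \<and> (q, s) \<in> E \<and> triangle_free_arc E s p \<and> triangle_free_arc E r q \<or>
         (p, s) \<in> E \<and> (q, r) \<in> E \<and> triangle_free_arc E r p \<and> triangle_free_arc E s q"
proof -
  obtain x y x' y' where e: "{p, q} = {x, y}" "{r, s} = {x', y'}" "(x, x') \<in> E" "(y, y') \<in> E"
    and nx: "y' \<notin> out_nbr V E x \<union> second_out_nbr V E x"
    and ny: "x' \<notin> out_nbr V E y \<union> second_out_nbr V E y"
    using assms(2) unfolding loses_def by blast
  have mem: "x \<in> {p, q}" "y \<in> {p, q}" "x' \<in> {r, s}" "y' \<in> {r, s}"
    using e(1,2) by auto
  have "x' \<in> V" "y' \<in> V"
    using assms(1) e(3,4) by auto
  then have "triangle_free_arc E y' x" "triangle_free_arc E x' y"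
    using triangle_free_arc_if_not_out_nbr[OF assms(1) nx] triangle_free_arc_if_not_out_nbr[OF assms(1) ny]
      assms(3)[OF mem(1,4)] assms(3)[OF mem(2,3)] by auto
  moreover have "x = p \<and> y = q \<or> x = q \<and> y = p" "x' = r \<and> y' = s \<or> x' = s \<and> y' = r"
    using e(1,2) by (auto simp: doubleton_eq_iff)
  ultimately show ?thesis
    using e(3,4) by auto
qed

text \<open>The two ways in which a missing path abc can lose to a missing path xyz: the ends of abc
  beat the ends of xyz, or the middle of abc beats the ends of xyz.\<close>

definition ends_pattern :: "('a \<times> 'a) set \<Rightarrow> 'a \<Rightarrow> 'a \<Rightarrow> 'a \<Rightarrow> 'a \<Rightarrow> 'a \<Rightarrow> 'a \<Rightarrow> bool" where
  "ends_pattern E a b c x y z \<longleftrightarrow>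
     (a, x) \<in> E \<and> (a, z) \<in> E \<and> (c, x) \<in> E \<and> (c, z) \<in> E \<and> (b, y) \<in> E \<and>
     triangle_free_arc E y a \<and> triangle_free_arc E y c \<and>
     triangle_free_arc E x b \<and> triangle_free_arc E z b"

definition middle_pattern :: "('a \<times> 'a) set \<Rightarrow> 'a \<Rightarrow> 'a \<Rightarrow> 'a \<Rightarrow> 'a \<Rightarrow> 'a \<Rightarrow> 'a \<Rightarrow> bool" where
  "middle_pattern E a b c x y z \<longleftrightarrow>
     (b, x) \<in> E \<and> (b, z) \<in> E \<and> (a, y) \<in> E \<and> (c, y) \<in> E \<and>
     triangle_free_arc E x a \<and> triangle_free_arc E x c \<and>
     triangle_free_arc E z a \<and> triangle_free_arc E z c \<and> triangle_free_arc E y b"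

lemma path_loses_cases:
  assumes "E \<subseteq> V \<times> V" and asym: "\<And>u v. (u, v) \<in> E \<Longrightarrow> (v, u) \<notin> E"
    and "path_loses V E a b c x y z"
    and "\<And>u v. u \<in> {a, b, c} \<Longrightarrow> v \<in> {x, y, z} \<Longrightarrow> u \<noteq> v \<and> ((u, v) \<in> E \<or> (v, u) \<in> E)"
  shows "ends_pattern E a b c x y z \<or> middle_pattern E a b c x y z"
proof -
  have l: "loses V E {a, b} {x, y}" "loses V E {a, b} {y, z}"
    "loses V E {b, c} {x, y}" "loses V E {b, c} {y, z}"
    using assms(3) by (simp_all add: path_loses_def)
  have L:
    "(a, x) \<in> E \<and> (b, y) \<in> E \<and> triangle_free_arc E y a \<and> triangle_free_arc E x b \<or>
     (a, y) \<in> E \<and> (b, x) \<in> E \<and> triangle_free_arc E x a \<and> triangle_free_arc E y b"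
    "(a, y) \<in> E \<and> (b, z) \<in> E \<and> triangle_free_arc E z a \<and> triangle_free_arc E y b \<or>
     (a, z) \<in> E \<and> (b, y) \<in> E \<and> triangle_free_arc E y a \<and> triangle_free_arc E z b"
    "(b, x) \<in> E \<and> (c, y) \<in> E \<and> triangle_free_arc E y b \<and> triangle_free_arc E x c \<or>
     (b, y) \<in> E \<and> (c, x) \<in> E \<and> triangle_free_arc E x b \<and> triangle_free_arc E y c"
    "(b, y) \<in> E \<and> (c, z) \<in> E \<and> triangle_free_arc E z b \<and> triangle_free_arc E y c \<or>
     (b, z) \<in> E \<and> (c, y) \<in> E \<and> triangle_free_arc E y b \<and> triangle_free_arc E z c"
    by (rule loses_cases[OF assms(1) l(1)] loses_cases[OF assms(1) l(2)]
          loses_cases[OF assms(1) l(3)] loses_cases[OF assms(1) l(4)], rule assms(4); blast)+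
  from L(1) show ?thesis
  proof
    assume ab: "(a, x) \<in> E \<and> (b, y) \<in> E \<and> triangle_free_arc E y a \<and> triangle_free_arc E x b"
    then have "(a, y) \<notin> E" "(b, x) \<notin> E"
      using asym[OF triangle_free_arc_arc] by blast+
    with L(2,3) have az: "(a, z) \<in> E \<and> triangle_free_arc E z b" and cx: "(c, x) \<in> E \<and> triangle_free_arc E y c"
      by blast+
    then have "(b, z) \<notin> E"
      using asym[OF triangle_free_arc_arc] by blast
    with L(4) have "(c, z) \<in> E"
      by blast
    with ab az cx show ?thesis
      by (simp add: ends_pattern_def)
  next
    assume ab: "(a, y) \<in> E \<and> (b, x) \<in> E \<and> triangle_free_arc E x a \<and> triangle_free_arc E y b"
    then have "(b, y) \<notin> E" "(a, x) \<notin> E"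
      using asym[OF triangle_free_arc_arc] by blast+
    with L(2,3,4) have "(b, z) \<in> E \<and> triangle_free_arc E z a" "(c, y) \<in> E \<and> triangle_free_arc E x c"
      "triangle_free_arc E z c"
      by blast+
    with ab show ?thesis
      by (simp add: middle_pattern_def)
  qed
qed

lemma missing_path_closed:
  "missing_path V E a b c \<Longrightarrow> x \<in> {a, b, c} \<Longrightarrow> missing V E x y \<Longrightarrow> y \<in> {a, b, c}"
  unfolding missing_path_def by auto

lemma missing_path_vertices_eq:
  assumes "missing_path V E a b c" "missing_path V E a' b' c'"
    and "x \<in> {a, b, c}" "x \<in> {a', b', c'}"
  shows "{a, b, c} = {a', b', c'}"
proof -
  have "{p, q, r} \<subseteq> {p', q', r'}"
    if pqr: "missing_path V E p q r" and pqr': "missing_path V E p' q' r'"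
      and "x \<in> {p, q, r}" "x \<in> {p', q', r'}" for p q r p' q' r'
  proof -
    have "missing V E q p" "missing V E q r"
      using pqr by (auto simp: missing_path_def missing_def)
    moreover have "q \<in> {p', q', r'}"
      using calculation that(3,4) missing_path_closed[OF pqr'] by (auto simp: missing_def)
    ultimately show ?thesis
      using missing_path_closed[OF pqr'] by blast
  qed
  from this[OF assms] this[OF assms(2,1,4,3)] show ?thesis
    by blast
qed

lemma mod_add_Suc_neq: "j < k \<Longrightarrow> Suc d < k \<Longrightarrow> (j + Suc d) mod k \<noteq> (j :: nat)"
  by (cases "j + Suc d < k") (simp_all add: le_mod_geq)

lemma Suc_mod_neq_self: "2 \<le> k \<Longrightarrow> i < k \<Longrightarrow> Suc i mod k \<noteq> (i :: nat)"
  using mod_add_Suc_neq[of i k 0] by simp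

lemma ex_mod_add_Suc_eq:
  assumes "j < k" "t < k" "j \<noteq> (t :: nat)"
  shows "\<exists>d. Suc d < k \<and> (j + Suc d) mod k = t"
proof (cases "j < t")
  case True
  with assms show ?thesis
    by (intro exI[of _ "t - j - 1"]) auto
next
  case False
  with assms have "(j + Suc (t + k - j - 1)) mod k = t"
    by simp
  with False assms show ?thesis
    by (intro exI[of _ "t + k - j - 1"]) auto
qed

locale double_cycle_arcs =
  fixes E :: "('a \<times> 'a) set" and k :: nat and a b c :: "nat \<Rightarrow> 'a"
  assumes asym: "(x, y) \<in> E \<Longrightarrow> (y, x) \<notin> E"
    and two_le_k: "2 \<le> k"
    and middle_isolated: "i < k \<Longrightarrow> a i \<noteq> b i \<and> c i \<noteq> b i \<and>
      (a i, b i) \<notin> E \<and> (b i, a i) \<notin> E \<and> (c i, b i) \<notin> E \<and> (b i, c i) \<notin> E"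
    and ends_adjacent: "i < k \<Longrightarrow> (a i, c i) \<in> E \<or> (c i, a i) \<in> E"
    and components_adjacent: "i < k \<Longrightarrow> j < k \<Longrightarrow> i \<noteq> j \<Longrightarrow>
      x \<in> {a i, b i, c i} \<Longrightarrow> y \<in> {a j, b j, c j} \<Longrightarrow> (x, y) \<in> E \<or> (y, x) \<in> E"
    and consecutive_pattern: "i < k \<Longrightarrow>
      ends_pattern E (a i) (b i) (c i) (a (Suc i mod k)) (b (Suc i mod k)) (c (Suc i mod k)) \<or>
      middle_pattern E (a i) (b i) (c i) (a (Suc i mod k)) (b (Suc i mod k)) (c (Suc i mod k))"
begin

abbreviation component :: "nat \<Rightarrow> 'a set" where
  "component i \<equiv> {a i, b i, c i}"

abbreviation succ :: "nat \<Rightarrow> nat" where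
  "succ i \<equiv> Suc i mod k"

abbreviation K :: "'a set" where
  "K \<equiv> K_set k a b c"

definition beats_middle_and_end :: "'a \<Rightarrow> nat \<Rightarrow> bool" where
  "beats_middle_and_end w i \<longleftrightarrow> (w, b i) \<in> E \<and> ((w, a i) \<in> E \<or> (w, c i) \<in> E)"

definition beaten_by_middle_and_end :: "'a \<Rightarrow> nat \<Rightarrow> bool" where
  "beaten_by_middle_and_end w i \<longleftrightarrow> (b i, w) \<in> E \<and> ((a i, w) \<in> E \<or> (c i, w) \<in> E)"

lemma irrefl: "(x, x) \<notin> E"
  using asym by blast

lemma succ_less: "succ i < k"
  using two_le_k by simp

lemma succ_neq: "i < k \<Longrightarrow> succ i \<noteq> i"
  using Suc_mod_neq_self two_le_k by blast

lemma mem_K: "x \<in> K \<longleftrightarrow> (\<exists>j<k. x \<in> component j)"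
  by (auto simp: K_set_def)

lemma succ_to_component_arc_triangle_free:
  assumes "i < k" "y \<in> component (succ i)" "x \<in> component i" "(y, x) \<in> E"
  shows "triangle_free_arc E y x"
  using consecutive_pattern[OF assms(1)] assms(2-4) middle_isolated[OF assms(1)]
  by (auto simp: ends_pattern_def middle_pattern_def dest: asym triangle_free_arc_arc)

lemma not_beats_middle_and_end_succ:
  "i < k \<Longrightarrow> w \<in> component i \<Longrightarrow> \<not> beats_middle_and_end w (succ i)"
  using consecutive_pattern[of i]
  by (auto simp: beats_middle_and_end_def ends_pattern_def middle_pattern_def
      dest: asym triangle_free_arc_arc)

lemma not_beaten_by_middle_and_end_pred:
  "i < k \<Longrightarrow> w \<in> component (succ i) \<Longrightarrow> \<not> beaten_by_middle_and_end w i"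
  using consecutive_pattern[of i]
  by (auto simp: beaten_by_middle_and_end_def ends_pattern_def middle_pattern_def
      dest: asym triangle_free_arc_arc)

lemma beats_middle_and_end_pred:
  assumes "i < k" "j < k" "j \<noteq> i" "w \<in> component j"
    and "beats_middle_and_end w (succ i)"
  shows "beats_middle_and_end w i"
proof -
  have "(w, a i) \<in> E \<or> (a i, w) \<in> E" "(w, b i) \<in> E \<or> (b i, w) \<in> E"
    using components_adjacent[OF assms(2,1,3,4)] by auto
  with consecutive_pattern[OF assms(1)] assms(5) show ?thesis
    unfolding beats_middle_and_end_def ends_pattern_def middle_pattern_def
    by (meson triangle_free_arc_no_triangle)
qed

lemma beaten_by_middle_and_end_succ:
  assumes "i < k" "j < k" "j \<noteq> succ i" "w \<in> component j"
    and "beaten_by_middle_and_end w i"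
  shows "beaten_by_middle_and_end w (succ i)"
proof -
  have "(w, a (succ i)) \<in> E \<or> (a (succ i), w) \<in> E" "(w, b (succ i)) \<in> E \<or> (b (succ i), w) \<in> E"
    using components_adjacent[OF assms(2) succ_less assms(3,4)] by auto
  with consecutive_pattern[OF assms(1)] assms(5) show ?thesis
    unfolding beaten_by_middle_and_end_def ends_pattern_def middle_pattern_def
    by (meson triangle_free_arc_no_triangle)
qed

lemma not_beats_middle_and_end:
  assumes "j < k" "t < k" "j \<noteq> t" "w \<in> component j"
  shows "\<not> beats_middle_and_end w t"
proof -
  have "\<not> beats_middle_and_end w ((j + Suc d) mod k)" if "Suc d < k" for d
    using that
  proof (induction d)
    case 0
    then show ?case
      using not_beats_middle_and_end_succ[OF assms(1,4)] by simp
  next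
    case (Suc d)
    let ?i = "(j + Suc d) mod k"
    have "?i < k" "j \<noteq> ?i"
      using mod_add_Suc_neq[OF assms(1), of d] Suc.prems by auto
    moreover have "\<not> beats_middle_and_end w ?i"
      using Suc by simp
    ultimately have "\<not> beats_middle_and_end w (succ ?i)"
      using beats_middle_and_end_pred[OF _ assms(1) _ assms(4)] by blast
    moreover have "succ ?i = (j + Suc (Suc d)) mod k"
      by (simp add: mod_Suc_eq)
    ultimately show ?case
      by simp
  qed
  with ex_mod_add_Suc_eq[OF assms(1-3)] show ?thesis
    by blast
qed

lemma not_beaten_by_middle_and_end:
  assumes "j < k" "t < k" "j \<noteq> t" "w \<in> component j"
  shows "\<not> beaten_by_middle_and_end w t"
proof -
  have "\<not> beaten_by_middle_and_end w i"
    if "i < k" "Suc d < k" "w \<in> component ((i + Suc d) mod k)" for i d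
    using that
  proof (induction d arbitrary: i)
    case 0
    then show ?case
      using not_beaten_by_middle_and_end_pred by simp
  next
    case (Suc d)
    let ?j = "(i + Suc (Suc d)) mod k"
    have "?j = (succ i + Suc d) mod k"
      unfolding mod_add_left_eq by simp
    then have "\<not> beaten_by_middle_and_end w (succ i)" "?j \<noteq> succ i"
      using Suc.IH[OF succ_less] Suc.prems mod_add_Suc_neq[OF succ_less, of d] by auto
    then show ?case
      using beaten_by_middle_and_end_succ[OF Suc.prems(1) _ _ Suc.prems(3)] two_le_k by auto
  qed
  moreover obtain d where "Suc d < k" "(t + Suc d) mod k = j"
    using ex_mod_add_Suc_eq[OF assms(2,1)] assms(3) by blast
  ultimately show ?thesis
    using assms(2,4) by blast
qed

lemma component_subset_K: "i < k \<Longrightarrow> component i \<subseteq> K"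
  by (auto simp: K_set_def)

lemma succ_component_not_second_out_nbr:
  assumes "t < k" "v \<in> component t" "w \<in> component (succ t)"
  shows "w \<notin> second_out_nbr K E v"
proof
  assume "w \<in> second_out_nbr K E v"
  then obtain u where "(v, u) \<in> E" "(u, w) \<in> E" "(v, w) \<notin> E"
    by (rule second_out_nbrE)
  moreover have "(w, v) \<in> E"
    using components_adjacent[OF succ_less assms(1) succ_neq[OF assms(1)] assms(3,2)] calculation(3)
    by blast
  ultimately show False
    using triangle_free_arc_no_triangle[OF succ_to_component_arc_triangle_free[OF assms(1,3,2)]] by blast
qed

lemma second_out_nbr_subset:
  assumes "t < k" "v \<in> component t"
  shows "second_out_nbr K E v \<subseteq> in_nbr K E v \<union> (component t - {v})"
proof
  fix w
  assume "w \<in> second_out_nbr K E v"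
  then have w: "w \<in> K" "(v, w) \<notin> E" "w \<noteq> v"
    by (auto elim: second_out_nbrE)
  then obtain j where j: "j < k" "w \<in> component j"
    by (auto simp: mem_K)
  show "w \<in> in_nbr K E v \<union> (component t - {v})"
  proof (cases "j = t")
    case False
    then have "(w, v) \<in> E"
      using components_adjacent[OF j(1) assms(1) False j(2) assms(2)] w(2) by blast
    with w(1) show ?thesis
      by (simp add: in_nbr_def)
  qed (use j w in auto)
qed

text \<open>If u does not reach w, then w \<rightarrow> u, and the triangle-free arc u \<rightarrow> v' forces w \<rightarrow> v';
  so w would beat both v and v'.\<close>

lemma in_nbr_mem_second_out_nbr:
  assumes "t < k" "v \<in> component t" "v' \<in> component t" "v \<noteq> v'" "b t \<in> {v, v'}"
    and u: "u \<in> component (succ t)" "(v, u) \<in> E" "triangle_free_arc E u v'"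
    and w: "w \<in> in_nbr K E v" "w \<notin> component t" "w \<notin> component (succ t)"
  shows "w \<in> second_out_nbr K E v"
proof -
  have wv: "w \<in> K" "(w, v) \<in> E"
    using w(1) by (auto simp: in_nbr_def)
  then obtain j where j: "j < k" "w \<in> component j"
    by (auto simp: mem_K)
  have jt: "j \<noteq> t" and js: "j \<noteq> succ t"
    using j w(2,3) by auto
  show ?thesis
  proof (cases "(u, w) \<in> E")
    case True
    have "u \<in> K"
      using component_subset_K[OF succ_less] u(1) by blast
    moreover have "w \<noteq> v"
      using wv(2) irrefl by auto
    ultimately show ?thesis
      using second_out_nbrI[OF wv(1) _ u(2) True asym[OF wv(2)]] by blast
  next
    case False
    then have "(w, u) \<in> E"
      using components_adjacent[OF j(1) succ_less js j(2) u(1)] by blast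
    then have "(v', w) \<notin> E"
      using triangle_free_arc_no_triangle[OF u(3)] by blast
    then have "(w, v') \<in> E"
      using components_adjacent[OF j(1) assms(1) jt j(2) assms(3)] by blast
    with wv(2) assms(2-5) have "beats_middle_and_end w t"
      by (auto simp: beats_middle_and_end_def)
    with not_beats_middle_and_end[OF j(1) assms(1) jt j(2)] show ?thesis
      by blast
  qed
qed

lemma end_not_second_out_nbr_end:
  assumes "t < k" "v \<in> {a t, c t}" "q \<in> {a t, c t}" "v \<noteq> q"
  shows "q \<notin> second_out_nbr K E v"
proof
  assume "q \<in> second_out_nbr K E v"
  then obtain u where u: "u \<in> K" "(v, u) \<in> E" "(u, q) \<in> E" and "(v, q) \<notin> E"
    by (rule second_out_nbrE)
  then have qv: "(q, v) \<in> E"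
    using ends_adjacent[OF assms(1)] assms(2-4) by auto
  obtain j where j: "j < k" "u \<in> component j"
    using u(1) by (auto simp: mem_K)
  have "(v, b t) \<notin> E"
    using assms(2) middle_isolated[OF assms(1)] by auto
  then have "u \<notin> {v, b t, q}"
    using u(2) \<open>(v, q) \<notin> E\<close> irrefl by auto
  moreover have "component t = {v, b t, q}"
    using assms(2-4) by auto
  ultimately have jt: "j \<noteq> t"
    using j(2) by auto
  have "j \<noteq> succ t"
  proof
    assume "j = succ t"
    then have "triangle_free_arc E u q"
      using succ_to_component_arc_triangle_free[OF assms(1)] j(2) u(3) assms(3) by blast
    with qv u(2) show False
      using triangle_free_arc_no_triangle by metis
  qed
  consider "(u, b t) \<in> E" | "(b t, u) \<in> E"
    using components_adjacent[OF j(1) assms(1) jt j(2)] by blast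
  then show False
  proof cases
    case 1
    with u(3) assms(3) have "beats_middle_and_end u t"
      by (auto simp: beats_middle_and_end_def)
    with not_beats_middle_and_end[OF j(1) assms(1) jt j(2)] show False ..
  next
    case 2
    with u(2) assms(2) have "beaten_by_middle_and_end u t"
      by (auto simp: beaten_by_middle_and_end_def)
    with not_beaten_by_middle_and_end[OF j(1) assms(1) jt j(2)] show False ..
  qed
qed

lemma end_witness:
  "t < k \<Longrightarrow> v \<in> {a t, c t} \<Longrightarrow>
    \<exists>u \<in> component (succ t). (v, u) \<in> E \<and> triangle_free_arc E u (b t)"
  using consecutive_pattern[of t] by (auto simp: ends_pattern_def middle_pattern_def)

lemma middle_witness:
  "t < k \<Longrightarrow> \<exists>u \<in> component (succ t). (b t, u) \<in> E \<and> triangle_free_arc E u (a t)"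
  using consecutive_pattern[of t] by (auto simp: ends_pattern_def middle_pattern_def)

lemma middle_to_end_path:
  "t < k \<Longrightarrow> \<exists>u \<in> component (succ t). (b t, u) \<in> E \<and> (u, c t) \<in> E"
  using consecutive_pattern[of t]
  by (auto simp: ends_pattern_def middle_pattern_def dest: triangle_free_arc_arc)

lemma second_out_nbr_end:
  assumes "t < k" "v \<in> {a t, c t}" "q \<in> {a t, c t}" "v \<noteq> q"
  shows "second_out_nbr K E v =
    (in_nbr K E v \<union> {b t}) - {a (succ t), b (succ t), c (succ t), q}"
proof
  have v: "v \<in> component t" "b t \<in> component t" "(v, b t) \<notin> E" "v \<noteq> b t"
    using assms(2) middle_isolated[OF assms(1)] by auto
  have other: "component t - {v} \<subseteq> {b t, q}"
    using assms(2-4) by auto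
  show "second_out_nbr K E v \<subseteq> (in_nbr K E v \<union> {b t}) - {a (succ t), b (succ t), c (succ t), q}"
  proof
    fix w
    assume "w \<in> second_out_nbr K E v"
    then have "w \<in> in_nbr K E v \<union> (component t - {v})" "w \<notin> component (succ t)" "w \<noteq> q"
      using second_out_nbr_subset[OF assms(1) v(1)] succ_component_not_second_out_nbr[OF assms(1) v(1)]
        end_not_second_out_nbr_end[OF assms] by blast+
    with other show "w \<in> (in_nbr K E v \<union> {b t}) - {a (succ t), b (succ t), c (succ t), q}"
      by blast
  qed
next
  obtain u where u: "u \<in> component (succ t)" "(v, u) \<in> E" "triangle_free_arc E u (b t)"
    using end_witness[OF assms(1,2)] by blast
  have v: "v \<in> component t" "b t \<in> component t" "(v, b t) \<notin> E" "v \<noteq> b t"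
    using assms(2) middle_isolated[OF assms(1)] by auto
  have comp: "component t = {v, b t, q}"
    using assms(2-4) by auto
  show "(in_nbr K E v \<union> {b t}) - {a (succ t), b (succ t), c (succ t), q} \<subseteq> second_out_nbr K E v"
  proof
    fix w
    assume w: "w \<in> (in_nbr K E v \<union> {b t}) - {a (succ t), b (succ t), c (succ t), q}"
    show "w \<in> second_out_nbr K E v"
    proof (cases "w = b t")
      case True
      have "b t \<in> K" "u \<in> K"
        using component_subset_K[OF assms(1)] component_subset_K[OF succ_less] u(1) v(2) by auto
      with True v(3,4) u(2) triangle_free_arc_arc[OF u(3)] show ?thesis
        using second_out_nbrI[of "b t" K u v E] by blast
    next
      case False
      have "w \<in> in_nbr K E v" "w \<noteq> v"
        using w False irrefl by (auto simp: in_nbr_def)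
      with w False comp have "w \<notin> component t" "w \<notin> component (succ t)"
        by auto
      with \<open>w \<in> in_nbr K E v\<close> show ?thesis
        using in_nbr_mem_second_out_nbr[OF assms(1) v(1,2,4) _ u] by blast
    qed
  qed
qed

lemma second_out_nbr_middle:
  assumes "t < k"
  shows "second_out_nbr K E (b t) =
    (in_nbr K E (b t) \<union> {a t, c t}) - {a (succ t), b (succ t), c (succ t)}"
proof
  show "second_out_nbr K E (b t) \<subseteq> (in_nbr K E (b t) \<union> {a t, c t}) - {a (succ t), b (succ t), c (succ t)}"
    using second_out_nbr_subset[OF assms, of "b t"] succ_component_not_second_out_nbr[OF assms, of "b t"]
    by auto
next
  obtain u where u: "u \<in> component (succ t)" "(b t, u) \<in> E" "triangle_free_arc E u (a t)"
    using middle_witness[OF assms] by blast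
  obtain u' where u': "u' \<in> component (succ t)" "(b t, u') \<in> E" "(u', c t) \<in> E"
    using middle_to_end_path[OF assms] by blast
  have "component t \<subseteq> K" "u \<in> K" "u' \<in> K"
    using component_subset_K[OF assms] component_subset_K[OF succ_less] u(1) u'(1) by auto
  then have ends: "a t \<in> second_out_nbr K E (b t)" "c t \<in> second_out_nbr K E (b t)"
    using second_out_nbrI[of "a t" K u "b t" E] second_out_nbrI[of "c t" K u' "b t" E]
      u(2) triangle_free_arc_arc[OF u(3)] u'(2,3) middle_isolated[OF assms] by auto
  show "(in_nbr K E (b t) \<union> {a t, c t}) - {a (succ t), b (succ t), c (succ t)} \<subseteq> second_out_nbr K E (b t)"
  proof
    fix w
    assume w: "w \<in> (in_nbr K E (b t) \<union> {a t, c t}) - {a (succ t), b (succ t), c (succ t)}"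
    show "w \<in> second_out_nbr K E (b t)"
    proof (cases "w \<in> {a t, c t}")
      case False
      with w have "w \<in> in_nbr K E (b t)" "w \<notin> component t" "w \<notin> component (succ t)"
        using irrefl by (auto simp: in_nbr_def)
      with u show ?thesis
        using in_nbr_mem_second_out_nbr[OF assms _ _ _ _ u] middle_isolated[OF assms] by auto
    qed (use ends in auto)
  qed
qed

end

lemma missing_path_components_adjacent:
  assumes "missing_path V E p q r" "missing_path V E p' q' r'" "{p, q, r} \<noteq> {p', q', r'}"
    and "x \<in> {p, q, r}" "y \<in> {p', q', r'}"
  shows "(x, y) \<in> E \<or> (y, x) \<in> E"
proof (rule ccontr)
  assume "\<not> ((x, y) \<in> E \<or> (y, x) \<in> E)"
  moreover have "x \<noteq> y"
    using missing_path_vertices_eq[OF assms(1,2)] assms(3-5) by blast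
  moreover have "x \<in> V" "y \<in> V"
    using assms(1,2,4,5) by (auto simp: missing_path_def missing_def)
  ultimately have "missing V E x y"
    by (simp add: missing_def)
  then have "y \<in> {p, q, r}"
    using missing_path_closed[OF assms(1,4)] by blast
  then show False
    using missing_path_vertices_eq[OF assms(1,2) _ assms(5)] assms(3) by blast
qed

lemma double_cycle_arcs_if_double_cycle:
  assumes "tournament_missing_P2 V E" "double_cycle V E k a b c"
  shows "double_cycle_arcs E k a b c"
proof -
  have EV: "E \<subseteq> V \<times> V" and asym: "\<And>x y. (x, y) \<in> E \<Longrightarrow> (y, x) \<notin> E"
    using assms(1) by (auto simp: tournament_missing_P2_def oriented_graph_def)
  have k: "2 \<le> k"
    and mp: "\<And>i. i < k \<Longrightarrow> missing_path V E (a i) (b i) (c i)"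
    and distinct: "\<And>i j. i < k \<Longrightarrow> j < k \<Longrightarrow> i \<noteq> j \<Longrightarrow> {a i, b i, c i} \<noteq> {a j, b j, c j}"
    and consecutive_lose: "\<And>i. i < k \<Longrightarrow>
      path_loses V E (a i) (b i) (c i) (a (Suc i mod k)) (b (Suc i mod k)) (c (Suc i mod k))"
    using assms(2) by (auto simp: double_cycle_def)
  have adjacent: "(x, y) \<in> E \<or> (y, x) \<in> E"
    if "i < k" "j < k" "i \<noteq> j" "x \<in> {a i, b i, c i}" "y \<in> {a j, b j, c j}" for i j x y
    using missing_path_components_adjacent[OF mp[OF that(1)] mp[OF that(2)] distinct[OF that(1-3)] that(4,5)] .
  show ?thesis
  proof
    fix i
    assume i: "i < k"
    have "missing V E (a i) (b i)" "missing V E (b i) (c i)" "\<not> missing V E (a i) (c i)" "a i \<noteq> c i"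
      using mp[OF i] by (simp_all add: missing_path_def)
    then show "a i \<noteq> b i \<and> c i \<noteq> b i \<and>
        (a i, b i) \<notin> E \<and> (b i, a i) \<notin> E \<and> (c i, b i) \<notin> E \<and> (b i, c i) \<notin> E"
      and "(a i, c i) \<in> E \<or> (c i, a i) \<in> E"
      by (auto simp: missing_def)
    have "Suc i mod k < k" "i \<noteq> Suc i mod k"
      using k Suc_mod_neq_self[OF k i] by auto
    then have "u \<noteq> v \<and> ((u, v) \<in> E \<or> (v, u) \<in> E)"
      if "u \<in> {a i, b i, c i}" "v \<in> {a (Suc i mod k), b (Suc i mod k), c (Suc i mod k)}" for u v
      using adjacent[OF i _ _ that] asym by blast
    then show "ends_pattern E (a i) (b i) (c i) (a (Suc i mod k)) (b (Suc i mod k)) (c (Suc i mod k)) \<or>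
      middle_pattern E (a i) (b i) (c i) (a (Suc i mod k)) (b (Suc i mod k)) (c (Suc i mod k))"
      using path_loses_cases[OF EV asym consecutive_lose[OF i]] by blast
  qed (fact asym k adjacent)+
qed

theorem lemma4p10:
  fixes V :: "'a set" and E :: "('a \<times> 'a) set" and k :: nat
    and a b c :: "nat \<Rightarrow> 'a"
  assumes "tournament_missing_P2 V E"
    and "double_cycle V E k a b c"
    and "t < k"
  shows "second_out_nbr (K_set k a b c) E (a t) =
           (in_nbr (K_set k a b c) E (a t) \<union> {b t}) -
             {a (Suc t mod k), b (Suc t mod k), c (Suc t mod k), c t} \<and>
         second_out_nbr (K_set k a b c) E (c t) =
           (in_nbr (K_set k a b c) E (c t) \<union> {b t}) -
             {a (Suc t mod k), b (Suc t mod k), c (Suc t mod k), a t} \<and>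
         second_out_nbr (K_set k a b c) E (b t) =
           (in_nbr (K_set k a b c) E (b t) \<union> {a t, c t}) -
             {a (Suc t mod k), b (Suc t mod k), c (Suc t mod k)}"
proof -
  interpret double_cycle_arcs E k a b c
    using double_cycle_arcs_if_double_cycle[OF assms(1,2)] .
  have "a t \<noteq> c t"
    using ends_adjacent[OF assms(3)] irrefl by auto
  then have "second_out_nbr K E (a t) =
      (in_nbr K E (a t) \<union> {b t}) - {a (succ t), b (succ t), c (succ t), c t}"
    "second_out_nbr K E (c t) =
      (in_nbr K E (c t) \<union> {b t}) - {a (succ t), b (succ t), c (succ t), a t}"
    using second_out_nbr_end[OF assms(3), of "a t" "c t"] second_out_nbr_end[OF assms(3), of "c t" "a t"]
    by simp_all
  with second_out_nbr_middle[OF assms(3)] show ?thesis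
    by (intro conjI)
qed

end
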